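(* Let $D(\theta,\gamma_1,\gamma_2)$ be an adaptive estimating function on the model $\mathcal{M}$ such that, for every $\mathbb{P}\in\mathcal{M}$, $D\{\theta(\mathbb{P}),\gamma_1(\mathbb{P}),\gamma_2(\mathbb{P})\}$ is an influence curve of $\theta$ at $\mathbb{P}$ relative to $\mathcal{M}$. Suppose that for every $\mathbb{P}\in\mathcal{M}$ the sections $\mathcal{M}_1(\mathbb{P})$ and $\mathcal{M}_2(\mathbb{P})$ are convex (and their elements are mutually absolutely continuous with square-integrable likelihood ratios). Then $D$ is doubly robust.
   Context: $X$ is a random element; $\mathcal{M}$ is a set of laws of $X$. $\theta:\mathcal{M}\to\mathbb{R}^k$ is the parameter of interest and $\gamma(\mathbb{P})=(\gamma_1(\mathbb{P}),\gamma_2(\mathbb{P}))$ a parameterization of nuisance functions; $(\theta(\mathbb{P}),\gamma_1(\mathbb{P}),\gamma_2(\mathbb{P}))$ is variation independent. An (adaptive) estimating function is a function $D(\theta,\gamma)=D(X;\theta,\gamma_1,\gamma_2)$ such that for every $\mathbb{P}\in\mathcal{M}$: $\mathbb{E}_{\mathbb{P}}[D\{\theta(\mathbb{P}),\gamma(\mathbb{P})\}]=0$; $\mathbb{E}_{\mathbb{P}}[D\{\theta',\gamma(\mathbb{P})\}]\neq0$ for $\theta'\neq\theta(\mathbb{P})$ near $\theta(\mathbb{P})$; and $\mathbb{E}_{\mathbb{P}}[D\{\theta,\gamma(\mathbb{P}')\}^2]<\infty$. It is doubly robust if for every $\mathbb{P}\in\mathcal{M}$ and all values $\gamma_1,\gamma_2$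 in the ranges of $\gamma_1(\cdot),\gamma_2(\cdot)$: $\mathbb{E}_{\mathbb{P}}[D\{\theta(\mathbb{P}),\gamma_1(\mathbb{P}),\gamma_2\}]=\mathbb{E}_{\mathbb{P}}[D\{\theta(\mathbb{P}),\gamma_1,\gamma_2(\mathbb{P})\}]=0$. Sections: $\mathcal{M}_1(\mathbb{P})=\{\mathbb{P}'\in\mathcal{M}:\theta(\mathbb{P}')=\theta(\mathbb{P}),\ \gamma_2(\mathbb{P}')=\gamma_2(\mathbb{P})\}$, $\mathcal{M}_2(\mathbb{P})=\{\mathbb{P}'\in\mathcal{M}:\theta(\mathbb{P}')=\theta(\mathbb{P}),\ \gamma_1(\mathbb{P}')=\gamma_1(\mathbb{P})\}$. An influence curve of $\theta$ at $\mathbb{P}$ relative to $\mathcal{M}$ is an $\mathrm{IC}(\mathbb{P})\in L_0^2(\mathbb{P})$ such that for every regular (quadratic-mean differentiable) parametric submodel $\{\mathbb{P}_t\}\subset\mathcal{M}$ with $\mathbb{P}_0=\mathbb{P}$ and score $S$, $\frac{d}{dt}\theta(\mathbb{P}_t)\big|_{t=0}=\mathbb{E}_{\mathbb{P}}[\mathrm{IC}(\mathbb{P})S(X)]$. *)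

theory Defs
  imports "HOL-Probability.Probability"
begin

text \<open>Laws are probability measures of type 'x measure; the model is a set of such
measures on a common measurable space.\<close>

definition variation_independent ::
  "'x measure set \<Rightarrow> ('x measure \<Rightarrow> real^'k) \<Rightarrow> ('x measure \<Rightarrow> 'a) \<Rightarrow> ('x measure \<Rightarrow> 'b) \<Rightarrow> bool" where
  "variation_independent M \<theta> \<gamma>1 \<gamma>2 \<longleftrightarrow>
     (\<forall>P1\<in>M. \<forall>P2\<in>M. \<forall>P3\<in>M. \<exists>P\<in>M. \<theta> P = \<theta> P1 \<and> \<gamma>1 P = \<gamma>1 P2 \<and> \<gamma>2 P = \<gamma>2 P3)"

definition estimating_function ::
  "'x measure set \<Rightarrow> ('x measure \<Rightarrow> real^'k) \<Rightarrow> ('x measure \<Rightarrow> 'a) \<Rightarrow> ('x measure \<Rightarrow> 'b)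
    \<Rightarrow> ('x \<Rightarrow> real^'k \<Rightarrow> 'a \<Rightarrow> 'b \<Rightarrow> real^'k) \<Rightarrow> bool" where
  "estimating_function M \<theta> \<gamma>1 \<gamma>2 D \<longleftrightarrow>
     (\<forall>P\<in>M.
        (\<integral>x. D x (\<theta> P) (\<gamma>1 P) (\<gamma>2 P) \<partial>P) = 0 \<and>
        (\<exists>e>0. \<forall>\<theta>'. \<theta>' \<noteq> \<theta> P \<and> dist \<theta>' (\<theta> P) < e \<longrightarrow>
                   (\<integral>x. D x \<theta>' (\<gamma>1 P) (\<gamma>2 P) \<partial>P) \<noteq> 0) \<and>
        (\<forall>\<theta>'. \<forall>P'\<in>M. (\<lambda>x. D x \<theta>' (\<gamma>1 P') (\<gamma>2 P')) \<in> borel_measurable P \<and>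
                      integrable P (\<lambda>x. (norm (D x \<theta>' (\<gamma>1 P') (\<gamma>2 P')))\<^sup>2)))"

definition doubly_robust ::
  "'x measure set \<Rightarrow> ('x measure \<Rightarrow> real^'k) \<Rightarrow> ('x measure \<Rightarrow> 'a) \<Rightarrow> ('x measure \<Rightarrow> 'b)
    \<Rightarrow> ('x \<Rightarrow> real^'k \<Rightarrow> 'a \<Rightarrow> 'b \<Rightarrow> real^'k) \<Rightarrow> bool" where
  "doubly_robust M \<theta> \<gamma>1 \<gamma>2 D \<longleftrightarrow>
     estimating_function M \<theta> \<gamma>1 \<gamma>2 D \<and>
     (\<forall>P\<in>M. \<forall>g1\<in>\<gamma>1 ` M. \<forall>g2\<in>\<gamma>2 ` M.
        (\<integral>x. D x (\<theta> P) (\<gamma>1 P) g2 \<partial>P) = 0 \<and> (\<integral>x. D x (\<theta> P) g1 (\<gamma>2 P) \<partial>P) = 0)"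

definition section1 ::
  "'x measure set \<Rightarrow> ('x measure \<Rightarrow> real^'k) \<Rightarrow> ('x measure \<Rightarrow> 'b) \<Rightarrow> 'x measure \<Rightarrow> 'x measure set" where
  "section1 M \<theta> \<gamma>2 P = {P'\<in>M. \<theta> P' = \<theta> P \<and> \<gamma>2 P' = \<gamma>2 P}"

definition section2 ::
  "'x measure set \<Rightarrow> ('x measure \<Rightarrow> real^'k) \<Rightarrow> ('x measure \<Rightarrow> 'a) \<Rightarrow> 'x measure \<Rightarrow> 'x measure set" where
  "section2 M \<theta> \<gamma>1 P = {P'\<in>M. \<theta> P' = \<theta> P \<and> \<gamma>1 P' = \<gamma>1 P}"

definition mixture :: "real \<Rightarrow> 'x measure \<Rightarrow> 'x measure \<Rightarrow> 'x measure" where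
  "mixture t P1 P2 = measure_of (space P1) (sets P1)
     (\<lambda>A. ennreal (1 - t) * emeasure P1 A + ennreal t * emeasure P2 A)"

definition convex_measures :: "'x measure set \<Rightarrow> bool" where
  "convex_measures S \<longleftrightarrow> (\<forall>P1\<in>S. \<forall>P2\<in>S. \<forall>t\<in>{0..1::real}. mixture t P1 P2 \<in> S)"

text \<open>Elements mutually absolutely continuous with square-integrable likelihood ratios;
RN_deriv P1 P2 is dP2/dP1.\<close>
definition mutually_ac_L2 :: "'x measure set \<Rightarrow> bool" where
  "mutually_ac_L2 S \<longleftrightarrow> (\<forall>P1\<in>S. \<forall>P2\<in>S. absolutely_continuous P1 P2 \<and>
       integrable P1 (\<lambda>x. (enn2real (RN_deriv P1 P2 x))\<^sup>2))"

text \<open>Regular (quadratic-mean differentiable) one-dimensional submodel t \<mapsto> Pt t,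
t \<in> [0,e], through P = Pt 0, with score S.\<close>
definition qmd_submodel :: "'x measure \<Rightarrow> (real \<Rightarrow> 'x measure) \<Rightarrow> real \<Rightarrow> ('x \<Rightarrow> real) \<Rightarrow> bool" where
  "qmd_submodel P Pt e S \<longleftrightarrow> 0 < e \<and> Pt 0 = P \<and>
     S \<in> borel_measurable P \<and> integrable P (\<lambda>x. (S x)\<^sup>2) \<and>
     (\<exists>\<mu> p. sigma_finite_measure \<mu> \<and> sets \<mu> = sets P \<and>
        (\<forall>t\<in>{0..e}. p t \<in> borel_measurable \<mu> \<and> (\<forall>x\<in>space \<mu>. 0 \<le> p t x) \<and>
                     Pt t = density \<mu> (\<lambda>x. ennreal (p t x))) \<and>
        (\<forall>\<^sub>F t in at_right 0. integrable \<mu>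
            (\<lambda>x. (sqrt (p t x) - sqrt (p 0 x) - t / 2 * S x * sqrt (p 0 x))\<^sup>2)) \<and>
        ((\<lambda>t. (\<integral>x. (sqrt (p t x) - sqrt (p 0 x) - t / 2 * S x * sqrt (p 0 x))\<^sup>2 \<partial>\<mu>) / t\<^sup>2)
            \<longlongrightarrow> 0) (at_right 0))"

definition influence_curve ::
  "'x measure set \<Rightarrow> ('x measure \<Rightarrow> real^'k) \<Rightarrow> 'x measure \<Rightarrow> ('x \<Rightarrow> real^'k) \<Rightarrow> bool" where
  "influence_curve M \<theta> P IC \<longleftrightarrow>
     IC \<in> borel_measurable P \<and> integrable P (\<lambda>x. (norm (IC x))\<^sup>2) \<and> (\<integral>x. IC x \<partial>P) = 0 \<and>
     (\<forall>Pt e S. qmd_submodel P Pt e S \<and> (\<forall>t\<in>{0..e}. Pt t \<in> M) \<longrightarrow>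
        ((\<lambda>t. \<theta> (Pt t)) has_vector_derivative (\<integral>x. S x *\<^sub>R IC x \<partial>P)) (at 0 within {0..e}))"

end

theory Submission
  imports Defs
begin

text \<open>Take \<open>Q\<close> with the nuisance values wanted in \<open>D\<close> and the law \<open>P\<close> at which the
expectation is computed in the same section.  By convexity the mixtures \<open>(1 - t) Q + t P\<close>
stay in that section, so \<open>\<theta>\<close> is constant along them.  Relative to \<open>Q\<close> they have densities
\<open>1 - t + t r\<close> with \<open>r = dP/dQ\<close>, so the path is quadratic-mean differentiable with score
\<open>r - 1\<close>: its remainder is the Taylor remainder of \<open>sqrt\<close> at \<open>1\<close>, bounded by
\<open>t\<^sup>2 (r - 1)\<^sup>2 / 4\<close> and by \<open>t\<^sup>4 (r - 1)\<^sup>4 / 4\<close>, and dominated convergence applies.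
Hence the influence curve \<open>D(\<theta>(Q), \<gamma>(Q))\<close> is orthogonal to \<open>r - 1\<close> under \<open>Q\<close>; as it also
has mean zero under \<open>Q\<close>, its mean under \<open>P\<close> vanishes.\<close>

lemma integral_dominated_convergence_at_right_0:
  fixes s :: "real \<Rightarrow> 'a \<Rightarrow> 'b::{banach, second_countable_topology}"
  assumes "f \<in> borel_measurable M" "\<And>t. s t \<in> borel_measurable M" "integrable M w"
    and lim: "AE x in M. ((\<lambda>t. s t x) \<longlongrightarrow> f x) (at_right 0)"
    and bound: "\<forall>\<^sub>F t in at_right 0. AE x in M. norm (s t x) \<le> w x"
  shows "((\<lambda>t. integral\<^sup>L M (s t)) \<longlongrightarrow> integral\<^sup>L M f) (at_right 0)"
  unfolding filterlim_at_right_to_top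
proof (rule integral_dominated_convergence_at_top[where w = w])
  show "AE x in M. ((\<lambda>u. s (inverse u) x) \<longlongrightarrow> f x) at_top"
    using lim by eventually_elim (simp add: filterlim_at_right_to_top)
  show "\<forall>\<^sub>F u in at_top. AE x in M. norm (s (inverse u) x) \<le> w x"
    using bound by (simp add: eventually_at_right_to_top)
qed fact+

lemma integrable_scaleR_of_square_integrable:
  fixes f :: "'a \<Rightarrow> real" and g :: "'a \<Rightarrow> 'b::{banach, second_countable_topology}"
  assumes [measurable]: "f \<in> borel_measurable M" "g \<in> borel_measurable M"
    and "integrable M (\<lambda>x. (f x)^2)" "integrable M (\<lambda>x. (norm (g x))^2)"
  shows "integrable M (\<lambda>x. f x *\<^sub>R g x)"
proof (rule Bochner_Integration.integrable_bound)
  show "integrable M (\<lambda>x. (f x)^2 + (norm (g x))^2)"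
    using assms by simp
  show "AE x in M. norm (f x *\<^sub>R g x) \<le> norm ((f x)^2 + (norm (g x))^2)"
  proof (rule AE_I2)
    fix x
    have "0 \<le> \<bar>f x\<bar> * norm (g x)"
      by simp
    then have "\<bar>f x\<bar> * norm (g x) \<le> (f x)^2 + (norm (g x))^2"
      using sum_squares_bound[of "\<bar>f x\<bar>" "norm (g x)"] unfolding power2_abs power2_eq_square
      by linarith
    then show "norm (f x *\<^sub>R g x) \<le> norm ((f x)^2 + (norm (g x))^2)"
      by simp
  qed
qed simp

lemma sqrt_one_plus_remainder_bounds:
  fixes u :: real
  assumes "u \<ge> -1"
  shows "(sqrt (1 + u) - 1 - u / 2)^2 \<le> u^2 / 4"
    and "(sqrt (1 + u) - 1 - u / 2)^2 \<le> u^4 / 4"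
proof -
  define y where "y = sqrt (1 + u)"
  have y_nonneg: "y \<ge> 0" and y_sq: "y^2 = 1 + u"
    using assms by (simp_all add: y_def)
  then have u_eq: "u = (y - 1) * (y + 1)"
    by (simp add: algebra_simps power2_eq_square)
  have "sqrt (1 + u) - 1 - u / 2 = - ((y - 1)^2 / 2)"
    using y_sq by (simp add: y_def[symmetric] power2_eq_square field_simps)
  then have remainder_sq: "(sqrt (1 + u) - 1 - u / 2)^2 = (y - 1)^4 / 4"
    by (simp add: power_divide flip: power_mult)
  have u_sq: "u^2 = (y - 1)^2 * (y + 1)^2" and u_4: "u^4 = ((y - 1)^2 * (y + 1)^2)^2"
    unfolding u_eq by (simp_all add: power_mult_distrib flip: power_mult)
  have fourth: "(y - 1)^4 = (y - 1)^2 * (y - 1)^2"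
    by (simp flip: power_add)
  have "(y - 1)^2 \<le> (y + 1)^2" and "1 \<le> (y + 1)^2"
    using y_nonneg by (simp_all add: power2_eq_square algebra_simps)
  then have "(y - 1)^2 * (y - 1)^2 \<le> (y - 1)^2 * (y + 1)^2"
    and "(y - 1)^2 * 1 \<le> (y - 1)^2 * (y + 1)^2"
    by (simp_all only: mult_left_mono zero_le_power2)
  moreover from this(2) have "(y - 1)^2 * (y - 1)^2 \<le> ((y - 1)^2 * (y + 1)^2)^2"
    by (metis mult_1_right power2_eq_square power_mono zero_le_power2)
  ultimately show "(sqrt (1 + u) - 1 - u / 2)^2 \<le> u^2 / 4"
    and "(sqrt (1 + u) - 1 - u / 2)^2 \<le> u^4 / 4"
    unfolding remainder_sq fourth u_sq u_4 by simp_all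
qed

lemma mixture_remainder_bounds:
  fixes t r :: real
  assumes "0 \<le> t" "t \<le> 1" "0 \<le> r"
  shows "(sqrt (1 - t + t * r) - 1 - t / 2 * (r - 1))^2 \<le> t^2 * (r - 1)^2 / 4"
    and "(sqrt (1 - t + t * r) - 1 - t / 2 * (r - 1))^2 \<le> t^4 * (r - 1)^4 / 4"
proof -
  define u where "u = t * (r - 1)"
  have "0 \<le> t * r"
    using assms by simp
  moreover have "u = t * r - t"
    by (simp add: u_def right_diff_distrib)
  ultimately have "u \<ge> -1"
    using assms by linarith
  have remainder_eq: "(sqrt (1 - t + t * r) - 1 - t / 2 * (r - 1))^2 = (sqrt (1 + u) - 1 - u / 2)^2"
    by (simp add: u_def algebra_simps)
  have "t^2 * (r - 1)^2 = u^2" and "t^4 * (r - 1)^4 = u^4"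
    by (simp_all add: u_def power_mult_distrib)
  with \<open>u \<ge> -1\<close> show "(sqrt (1 - t + t * r) - 1 - t / 2 * (r - 1))^2 \<le> t^2 * (r - 1)^2 / 4"
    and "(sqrt (1 - t + t * r) - 1 - t / 2 * (r - 1))^2 \<le> t^4 * (r - 1)^4 / 4"
    unfolding remainder_eq by (simp_all only: sqrt_one_plus_remainder_bounds)
qed

lemma mixture_remainder_integrable:
  fixes r :: "'a \<Rightarrow> real"
  assumes [measurable]: "r \<in> borel_measurable Q"
    and r_nonneg: "\<And>x. 0 \<le> r x"
    and score_L2: "integrable Q (\<lambda>x. (r x - 1)^2)"
    and "0 \<le> t" "t \<le> 1"
  shows "integrable Q (\<lambda>x. (sqrt (1 - t + t * r x) - 1 - t / 2 * (r x - 1))^2)"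
proof (rule Bochner_Integration.integrable_bound)
  show "integrable Q (\<lambda>x. t^2 * (r x - 1)^2 / 4)"
    using score_L2 by simp
  show "AE x in Q. norm ((sqrt (1 - t + t * r x) - 1 - t / 2 * (r x - 1))^2)
      \<le> norm (t^2 * (r x - 1)^2 / 4)"
    using mixture_remainder_bounds(1)[OF assms(4,5) r_nonneg] by simp
qed simp

lemma mixture_remainder_integral_tendsto_0:
  fixes r :: "'a \<Rightarrow> real"
  assumes [measurable]: "r \<in> borel_measurable Q"
    and r_nonneg: "\<And>x. 0 \<le> r x"
    and score_L2: "integrable Q (\<lambda>x. (r x - 1)^2)"
  shows "((\<lambda>t. (\<integral>x. (sqrt (1 - t + t * r x) - 1 - t / 2 * (r x - 1))^2 \<partial>Q) / t^2)
           \<longlongrightarrow> 0) (at_right 0)"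
proof -
  let ?R = "\<lambda>t x. (sqrt (1 - t + t * r x) - 1 - t / 2 * (r x - 1))^2 / t^2"
  have small_t: "\<forall>\<^sub>F t in at_right 0. 0 < t \<and> t \<le> (1::real)"
    by (auto simp: eventually_at_right_field intro!: exI[of _ 1])
  have R_bounds: "norm (?R t x) \<le> (r x - 1)^2 / 4" "?R t x \<le> t^2 * (r x - 1)^4 / 4"
    if "0 < t \<and> t \<le> 1" for t x
    using mixture_remainder_bounds[of t "r x"] that r_nonneg[of x]
    by (simp_all add: pos_divide_le_eq mult.commute power_add[of t 2 2, simplified])
  have "((\<lambda>t. \<integral>x. ?R t x \<partial>Q) \<longlongrightarrow> (\<integral>x. 0 \<partial>Q)) (at_right 0)"
  proof (rule integral_dominated_convergence_at_right_0[where w = "\<lambda>x. (r x - 1)^2 / 4"])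
    show "integrable Q (\<lambda>x. (r x - 1)^2 / 4)"
      using score_L2 by simp
    show "\<forall>\<^sub>F t in at_right 0. AE x in Q. norm (?R t x) \<le> (r x - 1)^2 / 4"
      using small_t by eventually_elim (intro AE_I2 R_bounds(1), assumption)
    show "AE x in Q. ((\<lambda>t. ?R t x) \<longlongrightarrow> 0) (at_right 0)"
    proof (rule AE_I2, rule tendsto_sandwich)
      fix x
      show "\<forall>\<^sub>F t in at_right 0. 0 \<le> ?R t x"
        by simp
      show "\<forall>\<^sub>F t in at_right 0. ?R t x \<le> t^2 * (r x - 1)^4 / 4"
        using small_t by eventually_elim (rule R_bounds(2))
      show "((\<lambda>t. t^2 * (r x - 1)^4 / 4) \<longlongrightarrow> 0) (at_right 0)"
        by (intro tendsto_eq_intros) auto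
    qed simp
  qed simp_all
  then show ?thesis
    by simp
qed

lemma mixture_eq_density:
  assumes "sets P = sets Q"
    and r: "r \<in> borel_measurable Q" "\<And>x. 0 \<le> r x"
    and P_eq: "P = density Q (\<lambda>x. ennreal (r x))"
    and t: "t \<in> {0..1}"
  shows "mixture t Q P = density Q (\<lambda>x. ennreal (1 - t + t * r x))"
proof -
  let ?D = "density Q (\<lambda>x. ennreal (1 - t + t * r x))"
  have "mixture t Q P = measure_of (space Q) (sets Q) (emeasure ?D)"
    unfolding mixture_def
  proof (rule measure_of_eq[OF sets.space_closed])
    fix A assume "A \<in> sigma_sets (space Q) (sets Q)"
    then have A: "A \<in> sets Q"
      by (simp add: sets.sigma_sets_eq)
    have "emeasure ?D A
        = (\<integral>\<^sup>+ x. ennreal (1 - t) * indicator A x + ennreal t * (ennreal (r x) * indicator A x) \<partial>Q)"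
      using A r t
      by (auto simp: emeasure_density ennreal_plus ennreal_mult distrib_right mult.assoc
          intro!: nn_integral_cong)
    also have "\<dots> = ennreal (1 - t) * emeasure Q A + ennreal t * emeasure P A"
      using A r unfolding P_eq by (simp add: nn_integral_add nn_integral_cmult emeasure_density)
    finally show "ennreal (1 - t) * emeasure Q A + ennreal t * emeasure P A = emeasure ?D A" ..
  qed
  also have "\<dots> = ?D"
    using measure_of_of_measure[of ?D] by simp
  finally show ?thesis .
qed

lemma qmd_submodel_mixture:
  assumes "prob_space Q" and "sets P = sets Q"
    and r[measurable]: "r \<in> borel_measurable Q" and r_nonneg: "\<And>x. 0 \<le> r x"
    and P_eq: "P = density Q (\<lambda>x. ennreal (r x))"
    and r_L2: "integrable Q (\<lambda>x. (r x)^2)"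
  shows "qmd_submodel Q (\<lambda>t. mixture t Q P) 1 (\<lambda>x. r x - 1)"
proof -
  interpret Q: prob_space Q by fact
  define p where "p t x = 1 - t + t * r x" for t x
  have p_measurable: "p t \<in> borel_measurable Q" for t
    unfolding p_def by measurable
  have p_nonneg: "0 \<le> p t x" if "t \<in> {0..1}" for t x
    using that r_nonneg[of x] by (simp add: p_def add_nonneg_nonneg)
  have mixture_density: "mixture t Q P = density Q (\<lambda>x. ennreal (p t x))" if "t \<in> {0..1}" for t
    unfolding p_def using mixture_eq_density[OF assms(2) r r_nonneg P_eq that] .
  have "integrable Q r"
    by (rule Q.square_integrable_imp_integrable) (use r_L2 in simp_all)
  then have score_L2: "integrable Q (\<lambda>x. (r x - 1)^2)"
    using r_L2 by (simp add: power2_diff)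
  have remainder_eq: "(sqrt (p t x) - sqrt (p 0 x) - t / 2 * (r x - 1) * sqrt (p 0 x))^2
      = (sqrt (1 - t + t * r x) - 1 - t / 2 * (r x - 1))^2" for t x
    by (simp add: p_def)
  have "\<forall>\<^sub>F t in at_right 0. 0 \<le> t \<and> t \<le> (1::real)"
    by (auto simp: eventually_at_right_field intro!: exI[of _ 1])
  then have remainder_integrable: "\<forall>\<^sub>F t in at_right 0.
      integrable Q (\<lambda>x. (sqrt (1 - t + t * r x) - 1 - t / 2 * (r x - 1))^2)"
    by eventually_elim (use mixture_remainder_integrable[OF r r_nonneg score_L2] in blast)
  show ?thesis
    unfolding qmd_submodel_def remainder_eq
  proof (intro conjI exI[of _ Q] exI[of _ p] ballI)
    show "sigma_finite_measure Q"
      by unfold_locales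
    show "p t \<in> borel_measurable Q" for t
      by (rule p_measurable)
    show "mixture 0 Q P = Q"
      using mixture_density[of 0] by (simp add: p_def density_1)
    show "mixture t Q P = density Q (\<lambda>x. ennreal (p t x))" "0 \<le> p t x"
      if "t \<in> {0..1}" for t x
      using that mixture_density p_nonneg by auto
  qed (use score_L2 remainder_integrable mixture_remainder_integral_tendsto_0[OF r r_nonneg score_L2]
      in \<open>simp_all add: p_def\<close>)
qed

lemma influence_curve_orthogonal_to_constant_submodel:
  assumes "influence_curve M \<theta> P IC"
    and "qmd_submodel P Pt e S"
    and "\<forall>t\<in>{0..e}. Pt t \<in> M \<and> \<theta> (Pt t) = \<theta> P"
  shows "(\<integral>x. S x *\<^sub>R IC x \<partial>P) = 0"
proof -
  have e: "0 < e"
    using assms(2) by (simp add: qmd_submodel_def)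
  have "((\<lambda>t. \<theta> (Pt t)) has_vector_derivative (\<integral>x. S x *\<^sub>R IC x \<partial>P)) (at 0 within {0..e})"
    using assms unfolding influence_curve_def by blast
  moreover have "((\<lambda>t. \<theta> (Pt t)) has_vector_derivative 0) (at 0 within {0..e})"
    by (rule has_vector_derivative_transform_within[OF has_vector_derivative_const[of "\<theta> P"] e])
      (use assms(3) e in auto)
  ultimately show ?thesis
    using vector_derivative_unique_within_closed_interval[of 0 e 0] e by auto
qed

lemma integral_influence_curve_mixture_eq_0:
  fixes IC :: "'x \<Rightarrow> real^'k"
  assumes "prob_space Q" "prob_space P" "sets P = sets Q"
    and ac: "absolutely_continuous Q P"
    and RN_L2: "integrable Q (\<lambda>x. (enn2real (RN_deriv Q P x))^2)"
    and path: "\<forall>t\<in>{0..1}. mixture t Q P \<in> M \<and> \<theta> (mixture t Q P) = \<theta> Q"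
    and IC: "influence_curve M \<theta> Q IC"
  shows "(\<integral>x. IC x \<partial>P) = 0"
proof -
  interpret Q: prob_space Q by fact
  interpret P: prob_space P by fact
  define r where "r x = enn2real (RN_deriv Q P x)" for x
  have r[measurable]: "r \<in> borel_measurable Q"
    unfolding r_def by measurable
  have r_nonneg: "\<And>x. 0 \<le> r x"
    by (simp add: r_def)
  have "P = density Q (RN_deriv Q P)"
    using Q.density_RN_deriv[OF ac assms(3)] ..
  also have "\<dots> = density Q (\<lambda>x. ennreal (r x))"
    using Q.RN_deriv_finite[OF P.sigma_finite_measure_axioms ac assms(3)]
    by (intro density_cong) (auto simp: r_def less_top elim: AE_mp)
  finally have P_eq: "P = density Q (\<lambda>x. ennreal (r x))" .
  from IC have [measurable]: "IC \<in> borel_measurable Q"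
    and IC_L2: "integrable Q (\<lambda>x. (norm (IC x))^2)" and IC_mean: "(\<integral>x. IC x \<partial>Q) = 0"
    unfolding influence_curve_def by blast+
  have "integrable Q IC"
    using Q.square_integrable_imp_integrable[of "\<lambda>x. norm (IC x)"] IC_L2
    by (simp add: integrable_norm_iff)
  moreover have "integrable Q (\<lambda>x. r x *\<^sub>R IC x)"
    using integrable_scaleR_of_square_integrable[OF r _ RN_L2[folded r_def] IC_L2] by simp
  ultimately have "(\<integral>x. IC x \<partial>P) = (\<integral>x. (r x - 1) *\<^sub>R IC x \<partial>Q) + (\<integral>x. IC x \<partial>Q)"
    unfolding P_eq by (simp add: integral_density r_nonneg scaleR_diff_left)
  also have "(\<integral>x. (r x - 1) *\<^sub>R IC x \<partial>Q) = 0"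
    using qmd_submodel_mixture[OF assms(1,3) r r_nonneg P_eq RN_L2[folded r_def]] path IC
    by (intro influence_curve_orthogonal_to_constant_submodel) auto
  finally show ?thesis
    using IC_mean by simp
qed

lemma integral_influence_curve_eq_0_on_convex_set:
  assumes "S \<subseteq> M" "convex_measures S" "mutually_ac_L2 S"
    and "\<forall>P'\<in>S. \<theta> P' = \<theta> Q" "Q \<in> S" "P \<in> S"
    and "prob_space Q" "prob_space P" "sets P = sets Q"
    and "influence_curve M \<theta> Q IC"
  shows "(\<integral>x. IC x \<partial>P) = 0"
proof (rule integral_influence_curve_mixture_eq_0[where M = M and \<theta> = \<theta>])
  show "absolutely_continuous Q P" "integrable Q (\<lambda>x. (enn2real (RN_deriv Q P x))^2)"
    using assms(3,5,6) unfolding mutually_ac_L2_def by blast+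
  show "\<forall>t\<in>{0..1}. mixture t Q P \<in> M \<and> \<theta> (mixture t Q P) = \<theta> Q"
    using assms(1,2,4-6) unfolding convex_measures_def by blast
qed (use assms in auto)

theorem theorem1:
  fixes M :: "'x measure set"
    and \<theta> :: "'x measure \<Rightarrow> real^'k"
    and \<gamma>1 :: "'x measure \<Rightarrow> 'a"
    and \<gamma>2 :: "'x measure \<Rightarrow> 'b"
    and D :: "'x \<Rightarrow> real^'k \<Rightarrow> 'a \<Rightarrow> 'b \<Rightarrow> real^'k"
  assumes laws: "\<forall>P\<in>M. prob_space P"
    and common_space: "\<forall>P\<in>M. \<forall>P'\<in>M. sets P' = sets P"
    and var_indep: "variation_independent M \<theta> \<gamma>1 \<gamma>2"
    and est: "estimating_function M \<theta> \<gamma>1 \<gamma>2 D"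
    and IC: "\<forall>P\<in>M. influence_curve M \<theta> P (\<lambda>x. D x (\<theta> P) (\<gamma>1 P) (\<gamma>2 P))"
    and convex1: "\<forall>P\<in>M. convex_measures (section1 M \<theta> \<gamma>2 P)"
    and convex2: "\<forall>P\<in>M. convex_measures (section2 M \<theta> \<gamma>1 P)"
    and ac1: "\<forall>P\<in>M. mutually_ac_L2 (section1 M \<theta> \<gamma>2 P)"
    and ac2: "\<forall>P\<in>M. mutually_ac_L2 (section2 M \<theta> \<gamma>1 P)"
  shows "doubly_robust M \<theta> \<gamma>1 \<gamma>2 D"
  unfolding doubly_robust_def
proof (intro conjI est ballI)
  fix P g1 g2 assume P: "P \<in> M" and "g1 \<in> \<gamma>1 ` M" "g2 \<in> \<gamma>2 ` M"
  then obtain P1 P2 where "P1 \<in> M" "g1 = \<gamma>1 P1" "P2 \<in> M" "g2 = \<gamma>2 P2"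
    by blast
  then obtain Q1 Q2 where
    Q1: "Q1 \<in> M" "\<theta> Q1 = \<theta> P" "\<gamma>1 Q1 = g1" "\<gamma>2 Q1 = \<gamma>2 P" and
    Q2: "Q2 \<in> M" "\<theta> Q2 = \<theta> P" "\<gamma>1 Q2 = \<gamma>1 P" "\<gamma>2 Q2 = g2"
    using var_indep P unfolding variation_independent_def by metis
  have "(\<integral>x. D x (\<theta> Q2) (\<gamma>1 Q2) (\<gamma>2 Q2) \<partial>P) = 0"
  proof (rule integral_influence_curve_eq_0_on_convex_set)
    show "section2 M \<theta> \<gamma>1 Q2 \<subseteq> M" "\<forall>P'\<in>section2 M \<theta> \<gamma>1 Q2. \<theta> P' = \<theta> Q2"
      "Q2 \<in> section2 M \<theta> \<gamma>1 Q2" "P \<in> section2 M \<theta> \<gamma>1 Q2"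
      using P Q2 unfolding section2_def by auto
  qed (simp_all add: P Q2(1) laws common_space[rule_format, OF Q2(1) P] IC convex2 ac2)
  then show "(\<integral>x. D x (\<theta> P) (\<gamma>1 P) g2 \<partial>P) = 0"
    using Q2 by simp
  have "(\<integral>x. D x (\<theta> Q1) (\<gamma>1 Q1) (\<gamma>2 Q1) \<partial>P) = 0"
  proof (rule integral_influence_curve_eq_0_on_convex_set)
    show "section1 M \<theta> \<gamma>2 Q1 \<subseteq> M" "\<forall>P'\<in>section1 M \<theta> \<gamma>2 Q1. \<theta> P' = \<theta> Q1"
      "Q1 \<in> section1 M \<theta> \<gamma>2 Q1" "P \<in> section1 M \<theta> \<gamma>2 Q1"
      using P Q1 unfolding section1_def by auto
  qed (simp_all add: P Q1(1) laws common_space[rule_format, OF Q1(1) P] IC convex1 ac1)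
  then show "(\<integral>x. D x (\<theta> P) g1 (\<gamma>2 P) \<partial>P) = 0"
    using Q1 by simp
qed

end
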